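(* Let $G$ be a connected nontrivial graph with $m$ vertices and let $n\geq2$. If $\min\{(3n-2)\lambda(G),\ m+2e(G)\}\geq \min\{2\xi(G)+4,\ 5\delta(G)+1\}$, then $G\boxtimes P_n$ is maximally restricted edge-connected, i.e. $\lambda'(G\boxtimes P_n)=\xi(G\boxtimes P_n)$.
   Context: All graphs are finite, simple and undirected; "nontrivial" means having at least two vertices. $P_n$ denotes the path on $n$ vertices. For a graph $G$: $e(G)=|E(G)|$; $\delta(G)$ is the minimum degree; $\lambda(G)$ is the edge-connectivity; for an edge $uv$, its edge-degree is $d_G(u)+d_G(v)-2$, and $\xi(G)$ is the minimum edge-degree over all edges of $G$. A restricted edge-cut of a connected graph $G$ is a set $S\subseteq E(G)$ such that $G-S$ is disconnected and every component of $G-S$ has at least $2$ vertices; $\lambda'(G)$ is the minimum cardinality of a restricted edge-cut. A graph $G$ is maximally restricted edge-connected if $\lambda'(G)=\xi(G)$. The strong product $G\boxtimes H$ has vertex set $V(G)\times V(H)$, with $(x_1,y_1)$ and $(x_2,y_2)$ adjacent iff either $x_1=x_2$ and $y_1y_2\in E(H)$, or $y_1=y_2$ and $x_1x_2\in E(G)$, or $x_1x_2\in E(G)$ and $y_1y_2\in E(H)$. (One has $\xi(G\boxtimes P_n)=\min\{2\xi(G)+4,5\delta(G)+1\}$.) *)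

theory Defs
  imports Main
begin

type_synonym 'a graph = "'a set \<times> 'a set set"

definition verts :: "'a graph \<Rightarrow> 'a set" where "verts G = fst G"
definition edges :: "'a graph \<Rightarrow> 'a set set" where "edges G = snd G"

definition simple_graph :: "'a graph \<Rightarrow> bool" where
  "simple_graph G \<longleftrightarrow> finite (verts G) \<and> (\<forall>e\<in>edges G. card e = 2 \<and> e \<subseteq> verts G)"

definition adj :: "'a graph \<Rightarrow> 'a \<Rightarrow> 'a \<Rightarrow> bool" where
  "adj G u v \<longleftrightarrow> {u, v} \<in> edges G"

definition reachable :: "'a graph \<Rightarrow> 'a \<Rightarrow> 'a \<Rightarrow> bool" where
  "reachable G u v \<longleftrightarrow> u \<in> verts G \<and> v \<in> verts G \<and> (adj G)\<^sup>*\<^sup>* u v"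

definition connected :: "'a graph \<Rightarrow> bool" where
  "connected G \<longleftrightarrow> verts G \<noteq> {} \<and> (\<forall>u\<in>verts G. \<forall>v\<in>verts G. reachable G u v)"

definition nontrivial :: "'a graph \<Rightarrow> bool" where
  "nontrivial G \<longleftrightarrow> card (verts G) \<ge> 2"

definition component :: "'a graph \<Rightarrow> 'a \<Rightarrow> 'a set" where
  "component G v = {u. reachable G v u}"

definition edge_delete :: "'a graph \<Rightarrow> 'a set set \<Rightarrow> 'a graph" where
  "edge_delete G S = (verts G, edges G - S)"

definition num_edges :: "'a graph \<Rightarrow> nat" where
  "num_edges G = card (edges G)"

definition degree :: "'a graph \<Rightarrow> 'a \<Rightarrow> nat" where
  "degree G v = card {e \<in> edges G. v \<in> e}"

definition min_degree :: "'a graph \<Rightarrow> nat" where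
  "min_degree G = Min (degree G ` verts G)"

definition min_edge_degree :: "'a graph \<Rightarrow> nat" where
  "min_edge_degree G = Min {degree G u + degree G v - 2 | u v. {u, v} \<in> edges G \<and> u \<noteq> v}"

definition edge_cut :: "'a graph \<Rightarrow> 'a set set \<Rightarrow> bool" where
  "edge_cut G S \<longleftrightarrow> S \<subseteq> edges G \<and> \<not> connected (edge_delete G S)"

definition edge_connectivity :: "'a graph \<Rightarrow> nat" where
  "edge_connectivity G = Inf {card S | S. edge_cut G S}"

definition restricted_edge_cut :: "'a graph \<Rightarrow> 'a set set \<Rightarrow> bool" where
  "restricted_edge_cut G S \<longleftrightarrow> edge_cut G S \<and>
     (\<forall>v\<in>verts G. card (component (edge_delete G S) v) \<ge> 2)"

definition restricted_edge_connectivity :: "'a graph \<Rightarrow> nat" where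
  "restricted_edge_connectivity G = Inf {card S | S. restricted_edge_cut G S}"

definition maximally_restricted_edge_connected :: "'a graph \<Rightarrow> bool" where
  "maximally_restricted_edge_connected G \<longleftrightarrow>
     restricted_edge_connectivity G = min_edge_degree G"

definition strong_product :: "'a graph \<Rightarrow> 'b graph \<Rightarrow> ('a \<times> 'b) graph" where
  "strong_product G H = (verts G \<times> verts H,
     {{(x1, y1), (x2, y2)} | x1 y1 x2 y2.
        x1 \<in> verts G \<and> x2 \<in> verts G \<and> y1 \<in> verts H \<and> y2 \<in> verts H \<and>
        ((x1 = x2 \<and> {y1, y2} \<in> edges H) \<or> (y1 = y2 \<and> {x1, x2} \<in> edges G) \<or>
         ({x1, x2} \<in> edges G \<and> {y1, y2} \<in> edges H))})"

definition path_graph :: "nat \<Rightarrow> nat graph" where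
  "path_graph n = ({0..<n}, {{i, Suc i} | i. Suc i < n})"

end

theory Submission
  imports Defs
begin

text \<open>
  Write \<open>H = G \<boxtimes> P\<^sub>n\<close> and view a vertex set \<open>X\<close> of \<open>H\<close> column by column, the column of
  \<open>x \<in> V(G)\<close> being \<open>{x} \<times> {0..<n}\<close>. Deleting the edges around an edge of minimum edge-degree
  isolates that edge and no vertex, since every vertex of \<open>H\<close> has three neighbours; hence
  \<open>\<lambda>'(H) \<le> \<xi>(H)\<close>. Conversely, a restricted edge cut contains the edge boundary of a set \<open>X\<close>
  such that neither \<open>X\<close> nor its complement has an isolated vertex. If \<open>X\<close> has a full and an
  empty column, every layer \<open>G \<times> {j}\<close> carries at least \<open>\<lambda>(G)\<close> boundary edges and every pair of
  consecutive layers at least \<open>2\<lambda>(G)\<close> diagonal ones, \<open>(3n - 2)\<lambda>(G)\<close> in total. Otherwise, up to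
  complementation, \<open>X\<close> has no full column, so the columns meeting \<open>X\<close> are mixed: each carries a
  vertical boundary edge, and each edge of \<open>G\<close> at a mixed column carries two boundary edges of
  \<open>H\<close>, or five if the other column is empty. Depending on whether a mixed column has a mixed
  neighbour, this gives \<open>2\<xi>(G) + 4\<close> or \<open>5\<delta>(G) + 1\<close> boundary edges, and both bound \<open>\<xi>(H)\<close> from
  above, witnessed by the edges \<open>(y,0)(z,0)\<close> and \<open>(x,0)(x,1)\<close> of \<open>H\<close>.
\<close>

section \<open>Edge boundaries and restricted edge cuts\<close>

definition edge_boundary :: "'a graph \<Rightarrow> 'a set \<Rightarrow> 'a set set" where
  "edge_boundary G X = {e \<in> edges G. e \<inter> X \<noteq> {} \<and> \<not> e \<subseteq> X}"

definition neighbours :: "'a graph \<Rightarrow> 'a \<Rightarrow> 'a set" where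
  "neighbours G x = {y. {x, y} \<in> edges G}"

lemma edge_boundaryI: "{p, q} \<in> edges G \<Longrightarrow> (p \<in> X) \<noteq> (q \<in> X) \<Longrightarrow> {p, q} \<in> edge_boundary G X"
  unfolding edge_boundary_def by auto

lemma doubleton_in_edge_boundary_iff:
  "{a, b} \<in> edges G \<Longrightarrow> {a, b} \<in> edge_boundary G X \<longleftrightarrow> (a \<in> X) \<noteq> (b \<in> X)"
  unfolding edge_boundary_def by auto

lemma edge_connectivity_le_card_edge_boundary:
  assumes "X \<subseteq> verts G" "x \<in> X" "y \<in> verts G" "y \<notin> X"
  shows "edge_connectivity G \<le> card (edge_boundary G X)"
proof -
  let ?G' = "edge_delete G (edge_boundary G X)"
  have "\<not> (adj ?G')\<^sup>*\<^sup>* x y"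
  proof
    assume "(adj ?G')\<^sup>*\<^sup>* x y"
    then have "y \<in> X"
    proof (induction rule: rtranclp_induct)
      case (step b c)
      then show ?case
        unfolding adj_def edge_delete_def edges_def edge_boundary_def by auto
    qed (use assms in simp)
    with assms show False by simp
  qed
  then have "edge_cut G (edge_boundary G X)"
    using assms unfolding edge_cut_def connected_def reachable_def edge_boundary_def
    by (auto simp: edge_delete_def verts_def)
  then show ?thesis
    unfolding edge_connectivity_def Inf_nat_def by (auto intro: Least_le)
qed

lemma restricted_edge_connectivity_le_card:
  "restricted_edge_cut G S \<Longrightarrow> restricted_edge_connectivity G \<le> card S"
  unfolding restricted_edge_connectivity_def Inf_nat_def by (auto intro: Least_le)

lemma le_restricted_edge_connectivity:
  assumes "restricted_edge_cut G S0" and "\<And>S. restricted_edge_cut G S \<Longrightarrow> k \<le> card S"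
  shows "k \<le> restricted_edge_connectivity G"
proof -
  have "{card S | S. restricted_edge_cut G S} \<noteq> {}" using assms(1) by blast
  then have "restricted_edge_connectivity G \<in> {card S | S. restricted_edge_cut G S}"
    unfolding restricted_edge_connectivity_def by (rule Inf_nat_def1)
  with assms(2) show ?thesis by auto
qed

lemma connected_nontrivial_has_neighbour:
  assumes "connected G" "nontrivial G" "x \<in> verts G"
  obtains y where "{x, y} \<in> edges G"
proof -
  have "\<not> verts G \<subseteq> {x}"
    using assms(2) card_mono[of "{x}" "verts G"] unfolding nontrivial_def by auto
  then obtain x' where "x' \<in> verts G" "x' \<noteq> x" by blast
  with assms(1,3) have "(adj G)\<^sup>*\<^sup>* x x'" "x' \<noteq> x"
    unfolding connected_def reachable_def by auto
  then show ?thesis using that by (metis adj_def converse_rtranclpE)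
qed

lemma adj_edge_delete: "adj (edge_delete G S) p q \<longleftrightarrow> {p, q} \<in> edges G \<and> {p, q} \<notin> S"
  unfolding adj_def edge_delete_def edges_def by simp

lemma verts_edge_delete [simp]: "verts (edge_delete G S) = verts G"
  unfolding edge_delete_def verts_def by simp

lemma two_le_card_component:
  assumes "finite (verts G)" "t \<in> verts G" "t' \<in> verts G" "adj G t t'" "t' \<noteq> t"
  shows "2 \<le> card (component G t)"
proof -
  have "component G t \<subseteq> verts G" unfolding component_def reachable_def by auto
  then have "finite (component G t)" using assms(1) finite_subset by blast
  moreover have "{t, t'} \<subseteq> component G t"
    using assms unfolding component_def reachable_def by auto
  ultimately show ?thesis using assms(5) card_mono[of "component G t" "{t, t'}"] by auto
qed

context
  fixes G :: "'a graph"
  assumes simple: "simple_graph G"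
begin

lemma finite_verts: "finite (verts G)"
  using simple unfolding simple_graph_def by auto

lemma finite_edges: "finite (edges G)"
proof -
  have "edges G \<subseteq> Pow (verts G)" using simple unfolding simple_graph_def by auto
  then show ?thesis using finite_verts finite_subset by blast
qed

lemma edge_doubleton:
  assumes "e \<in> edges G"
  obtains a b where "a \<noteq> b" "e = {a, b}"
  using simple assms unfolding simple_graph_def by (metis card_2_iff)

lemma edge_endpoints: "{a, b} \<in> edges G \<Longrightarrow> a \<noteq> b \<and> a \<in> verts G \<and> b \<in> verts G"
  using simple unfolding simple_graph_def by (cases "a = b") auto

lemma edge_at_vertex:
  assumes "e \<in> edges G" "x \<in> e"
  obtains w where "e = {x, w}"
proof -
  obtain a b where "e = {a, b}" using assms(1) edge_doubleton by metis
  with assms(2) show ?thesis using that by (auto simp: insert_commute)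
qed

lemma edge_boundary_oriented:
  assumes "e \<in> edge_boundary G X"
  obtains a b where "e = {a, b}" "{a, b} \<in> edges G" "a \<in> X" "b \<notin> X"
proof -
  have e: "e \<in> edges G" "e \<inter> X \<noteq> {}" "\<not> e \<subseteq> X"
    using assms unfolding edge_boundary_def by auto
  then obtain a b where "e = {a, b}" using edge_doubleton by metis
  show ?thesis
  proof (cases "a \<in> X")
    case True
    with e \<open>e = {a, b}\<close> show ?thesis by (intro that[of a b]) auto
  next
    case False
    with e \<open>e = {a, b}\<close> show ?thesis by (intro that[of b a]) (auto simp: insert_commute)
  qed
qed

lemma edge_boundary_complement: "edge_boundary G (verts G - X) = edge_boundary G X"
  using simple unfolding edge_boundary_def simple_graph_def by blast

lemma finite_edge_boundary: "finite (edge_boundary G X)"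
  using finite_edges unfolding edge_boundary_def by simp

lemma finite_neighbours: "finite (neighbours G x)"
proof -
  have "neighbours G x \<subseteq> verts G" unfolding neighbours_def using edge_endpoints by blast
  then show ?thesis using finite_verts finite_subset by blast
qed

lemma card_neighbours_le_degree: "card (neighbours G x) \<le> degree G x"
proof -
  have "inj_on (\<lambda>y. {x, y}) (neighbours G x)"
    unfolding inj_on_def neighbours_def using edge_endpoints by (auto simp: doubleton_eq_iff)
  then have "card (neighbours G x) = card ((\<lambda>y. {x, y}) ` neighbours G x)"
    by (simp add: card_image)
  also have "\<dots> \<le> card {e \<in> edges G. x \<in> e}"
    using finite_edges by (intro card_mono) (auto simp: neighbours_def)
  finally show ?thesis unfolding degree_def .
qed

lemma degree_pos: "{x, y} \<in> edges G \<Longrightarrow> 0 < degree G x"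
  unfolding degree_def using finite_edges by (auto simp: card_gt_0_iff)

lemma min_degree_le: "x \<in> verts G \<Longrightarrow> min_degree G \<le> degree G x"
  unfolding min_degree_def using finite_verts by simp

lemma min_degree_attained:
  assumes "verts G \<noteq> {}"
  obtains x where "x \<in> verts G" "min_degree G = degree G x"
proof -
  have "min_degree G \<in> degree G ` verts G"
    unfolding min_degree_def using assms finite_verts by (intro Min_in) auto
  then show ?thesis using that by blast
qed

lemma finite_edge_degrees:
  "finite {degree G u + degree G v - 2 | u v. {u, v} \<in> edges G \<and> u \<noteq> v}"
proof -
  have "{degree G u + degree G v - 2 | u v. {u, v} \<in> edges G \<and> u \<noteq> v}
      \<subseteq> (\<lambda>(u, v). degree G u + degree G v - 2) ` (verts G \<times> verts G)"
    using edge_endpoints by fastforce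
  then show ?thesis using finite_verts finite_subset by blast
qed

lemma min_edge_degree_le:
  "{u, v} \<in> edges G \<Longrightarrow> min_edge_degree G \<le> degree G u + degree G v - 2"
  unfolding min_edge_degree_def using edge_endpoints
  by (intro Min_le[OF finite_edge_degrees]) blast

lemma min_edge_degree_attained:
  assumes "edges G \<noteq> {}"
  obtains u v where "{u, v} \<in> edges G" "min_edge_degree G = degree G u + degree G v - 2"
proof -
  obtain e where "e \<in> edges G" using assms by blast
  then obtain a b where "{a, b} \<in> edges G" "a \<noteq> b" using edge_doubleton by metis
  then have "min_edge_degree G \<in> {degree G u + degree G v - 2 | u v. {u, v} \<in> edges G \<and> u \<noteq> v}"
    unfolding min_edge_degree_def by (intro Min_in[OF finite_edge_degrees]) blast
  then show ?thesis using that by blast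
qed

lemma card_edges_at_edge:
  assumes "{u, v} \<in> edges G"
  shows "card ({e \<in> edges G. u \<in> e} \<union> {e \<in> edges G. v \<in> e}) = degree G u + degree G v - 1"
proof -
  have "u \<noteq> v" using edge_endpoints assms by blast
  then have "{e \<in> edges G. u \<in> e} \<inter> {e \<in> edges G. v \<in> e} = {{u, v}}"
    using assms by (auto elim: edge_doubleton)
  then show ?thesis
    using card_Un_Int[of "{e \<in> edges G. u \<in> e}" "{e \<in> edges G. v \<in> e}"] finite_edges
    unfolding degree_def by simp
qed

lemma restricted_edge_cut_around_edge:
  assumes uv: "{u, v} \<in> edges G" and w: "w \<in> verts G" "w \<notin> {u, v}"
    and escape: "\<And>t. t \<in> verts G \<Longrightarrow> t \<notin> {u, v} \<Longrightarrow> \<exists>t'. {t, t'} \<in> edges G \<and> t' \<notin> {u, v}"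
  shows "restricted_edge_cut G (({e \<in> edges G. u \<in> e} \<union> {e \<in> edges G. v \<in> e}) - {{u, v}})"
    (is "restricted_edge_cut G ?S")
proof -
  let ?G' = "edge_delete G ?S"
  have uvV: "u \<noteq> v" "u \<in> verts G" "v \<in> verts G" using edge_endpoints[OF uv] by auto
  have trapped: "(adj ?G')\<^sup>*\<^sup>* u t \<Longrightarrow> t \<in> {u, v}" for t
  proof (induction rule: rtranclp_induct)
    case (step b c)
    then show ?case unfolding adj_edge_delete by auto
  qed simp
  have "\<not> connected ?G'"
    unfolding connected_def reachable_def using trapped w uvV by auto
  moreover have "2 \<le> card (component ?G' t)" if t: "t \<in> verts G" for t
  proof -
    obtain t' where "adj ?G' t t'" "t' \<noteq> t" "t' \<in> verts G"
    proof (cases "t \<in> {u, v}")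
      case True
      then show ?thesis
        using that[of v] that[of u] uv uvV unfolding adj_edge_delete by (auto simp: insert_commute)
    next
      case False
      then obtain t' where t': "{t, t'} \<in> edges G" "t' \<notin> {u, v}" using escape t by blast
      then show ?thesis
        using that[of t'] False edge_endpoints[OF t'(1)] unfolding adj_edge_delete by auto
    qed
    then show ?thesis using two_le_card_component[of ?G'] t finite_verts by simp
  qed
  ultimately show ?thesis unfolding restricted_edge_cut_def edge_cut_def by auto
qed

lemma restricted_edge_cut_min_edge_degree:
  assumes "edges G \<noteq> {}" "3 \<le> card (verts G)"
    and escape: "\<And>u v t. {u, v} \<in> edges G \<Longrightarrow> t \<in> verts G \<Longrightarrow> t \<notin> {u, v} \<Longrightarrow>
                   \<exists>t'. {t, t'} \<in> edges G \<and> t' \<notin> {u, v}"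
  obtains S where "restricted_edge_cut G S" "card S = min_edge_degree G"
proof -
  obtain u v where uv: "{u, v} \<in> edges G" "min_edge_degree G = degree G u + degree G v - 2"
    using min_edge_degree_attained assms(1) by metis
  have "card {u, v} \<le> 2" by (simp add: card_insert_if)
  then have "\<not> verts G \<subseteq> {u, v}" using assms(2) card_mono[of "{u, v}" "verts G"] by auto
  then obtain w where "w \<in> verts G" "w \<notin> {u, v}" by blast
  then have "restricted_edge_cut G (({e \<in> edges G. u \<in> e} \<union> {e \<in> edges G. v \<in> e}) - {{u, v}})"
    using restricted_edge_cut_around_edge uv escape by blast
  moreover have "card (({e \<in> edges G. u \<in> e} \<union> {e \<in> edges G. v \<in> e}) - {{u, v}}) = min_edge_degree G"
    using card_edges_at_edge[OF uv(1)] uv(1,2) finite_edges by (simp add: card_Diff_singleton)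
  ultimately show ?thesis using that by blast
qed

lemma restricted_edge_cut_separates:
  assumes S: "restricted_edge_cut G S" and ne: "verts G \<noteq> {}"
  obtains C where "C \<subseteq> verts G" "C \<noteq> {}" "verts G - C \<noteq> {}" "edge_boundary G C \<subseteq> S"
    "\<And>p. p \<in> C \<Longrightarrow> \<exists>q\<in>C. {p, q} \<in> edges G"
    "\<And>p. p \<in> verts G - C \<Longrightarrow> \<exists>q\<in>verts G - C. {p, q} \<in> edges G"
proof -
  let ?G' = "edge_delete G S"
  obtain a b where ab: "a \<in> verts G" "b \<in> verts G" "\<not> (adj ?G')\<^sup>*\<^sup>* a b"
    using S ne unfolding restricted_edge_cut_def edge_cut_def connected_def reachable_def by auto
  define C where "C = {t \<in> verts G. (adj ?G')\<^sup>*\<^sup>* a t}"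
  have adj_sym: "adj ?G' p q \<Longrightarrow> adj ?G' q p" for p q
    unfolding adj_edge_delete by (simp add: insert_commute)
  have adj_edge: "adj ?G' p q \<Longrightarrow> {p, q} \<in> edges G \<and> q \<in> verts G" for p q
    unfolding adj_edge_delete using edge_endpoints by blast
  have closed: "p \<in> C \<longleftrightarrow> q \<in> C" if pq: "adj ?G' p q" for p q
  proof -
    have "p \<in> verts G" "q \<in> verts G"
      using adj_edge[OF pq] adj_edge[OF adj_sym[OF pq]] by auto
    then show ?thesis
      using rtranclp.rtrancl_into_rtrancl[of "adj ?G'" a p q, OF _ pq]
        rtranclp.rtrancl_into_rtrancl[of "adj ?G'" a q p, OF _ adj_sym[OF pq]]
      unfolding C_def by blast
  qed
  have step: "\<exists>q. adj ?G' p q" if "p \<in> verts G" for p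
  proof -
    have "2 \<le> card (component ?G' p)"
      using S that unfolding restricted_edge_cut_def by auto
    moreover have "card (component ?G' p) \<le> 1" if "component ?G' p \<subseteq> {p}"
      using card_mono[OF _ that] by simp
    ultimately have "\<not> component ?G' p \<subseteq> {p}" by linarith
    then obtain q where "(adj ?G')\<^sup>*\<^sup>* p q" "q \<noteq> p"
      unfolding component_def reachable_def by auto
    then show ?thesis by (cases rule: converse_rtranclpE) auto
  qed
  show ?thesis
  proof (rule that)
    show "C \<subseteq> verts G" "C \<noteq> {}" "verts G - C \<noteq> {}"
      using ab unfolding C_def by auto
    show "edge_boundary G C \<subseteq> S"
    proof
      fix e assume "e \<in> edge_boundary G C"
      then obtain p q where "e = {p, q}" "{p, q} \<in> edges G" "p \<in> C" "q \<notin> C"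
        by (rule edge_boundary_oriented)
      then show "e \<in> S" using closed[of p q] unfolding adj_edge_delete by auto
    qed
    show "\<exists>q\<in>C. {p, q} \<in> edges G" if "p \<in> C" for p
      using that step closed adj_edge unfolding C_def by blast
    show "\<exists>q\<in>verts G - C. {p, q} \<in> edges G" if "p \<in> verts G - C" for p
      using that step closed adj_edge by blast
  qed
qed

end

section \<open>The strong product with a path\<close>

definition path_adj :: "nat \<Rightarrow> nat \<Rightarrow> bool" where
  "path_adj i j \<longleftrightarrow> j = Suc i \<or> i = Suc j"

definition product_adj :: "'a graph \<Rightarrow> nat \<Rightarrow> 'a \<times> nat \<Rightarrow> 'a \<times> nat \<Rightarrow> bool" where
  "product_adj G n p q \<longleftrightarrow> fst p \<in> verts G \<and> fst q \<in> verts G \<and> snd p < n \<and> snd q < n \<and>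
     ((fst p = fst q \<and> path_adj (snd p) (snd q)) \<or> (snd p = snd q \<and> {fst p, fst q} \<in> edges G) \<or>
      ({fst p, fst q} \<in> edges G \<and> path_adj (snd p) (snd q)))"

lemma product_adj_sym: "product_adj G n p q = product_adj G n q p"
  unfolding product_adj_def path_adj_def by (auto simp: insert_commute)

lemma edges_path_graph_iff: "{i, j} \<in> edges (path_graph n) \<longleftrightarrow> path_adj i j \<and> i < n \<and> j < n"
  unfolding path_graph_def edges_def path_adj_def by (auto simp: doubleton_eq_iff)

lemma verts_strong_product_path: "verts (strong_product G (path_graph n)) = verts G \<times> {0..<n}"
  unfolding strong_product_def verts_def path_graph_def by simp

lemma edges_strong_product_path:
  "edges (strong_product G (path_graph n)) = {{p, q} | p q. product_adj G n p q}"
proof -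
  have "edges (strong_product G (path_graph n)) =
     {{(x1, y1), (x2, y2)} | x1 y1 x2 y2.
        x1 \<in> verts G \<and> x2 \<in> verts G \<and> y1 \<in> verts (path_graph n) \<and> y2 \<in> verts (path_graph n) \<and>
        ((x1 = x2 \<and> {y1, y2} \<in> edges (path_graph n)) \<or> (y1 = y2 \<and> {x1, x2} \<in> edges G) \<or>
         ({x1, x2} \<in> edges G \<and> {y1, y2} \<in> edges (path_graph n)))}"
    unfolding strong_product_def edges_def by simp
  also have "\<dots> = {{p, q} | p q. product_adj G n p q}"
    unfolding product_adj_def edges_path_graph_iff by (auto simp: path_graph_def verts_def)
  finally show ?thesis .
qed

text \<open>
  With \<open>A\<close>, \<open>B\<close> the layers \<open>j\<close> and \<open>j + 1\<close> of a vertex set of \<open>G \<boxtimes> P\<^sub>n\<close> and \<open>ab\<close> an edge of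
  \<open>G\<close>, the right-hand side counts the diagonals over \<open>ab\<close> between these layers that leave the set.
\<close>
lemma crossing_count_ge_boundary_count:
  "of_bool ((a \<in> A \<inter> B) \<noteq> (b \<in> A \<inter> B)) + of_bool ((a \<in> A \<union> B) \<noteq> (b \<in> A \<union> B))
     \<le> (of_bool ((a \<in> A) \<noteq> (b \<in> B)) + of_bool ((b \<in> A) \<noteq> (a \<in> B)) :: nat)"
  by auto

locale graph_times_path =
  fixes G :: "'a graph" and n :: nat
  assumes simple: "simple_graph G" and two_le_n: "2 \<le> n"
begin

abbreviation H :: "('a \<times> nat) graph" where
  "H \<equiv> strong_product G (path_graph n)"

abbreviation padj :: "'a \<times> nat \<Rightarrow> 'a \<times> nat \<Rightarrow> bool" where
  "padj \<equiv> product_adj G n"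

lemma padj_distinct_verts: "padj p q \<Longrightarrow> p \<noteq> q \<and> p \<in> verts H \<and> q \<in> verts H"
  unfolding product_adj_def verts_strong_product_path path_adj_def
  using edge_endpoints[OF simple] by (cases p, cases q) auto

lemma edges_H_iff: "{p, q} \<in> edges H \<longleftrightarrow> padj p q"
proof
  assume "{p, q} \<in> edges H"
  then obtain a b where "{p, q} = {a, b}" "padj a b" unfolding edges_strong_product_path by auto
  then show "padj p q" by (metis doubleton_eq_iff product_adj_sym)
qed (unfold edges_strong_product_path, blast)

lemma simple_graph_H: "simple_graph H"
  unfolding simple_graph_def verts_strong_product_path
  using finite_verts[OF simple] padj_distinct_verts
  by (auto simp: edges_strong_product_path verts_strong_product_path)

lemma padj_vertical: "x \<in> verts G \<Longrightarrow> Suc j < n \<Longrightarrow> padj (x, j) (x, Suc j)"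
  unfolding product_adj_def path_adj_def by auto

lemma padj_horizontal: "{x, y} \<in> edges G \<Longrightarrow> j < n \<Longrightarrow> padj (x, j) (y, j)"
  unfolding product_adj_def using edge_endpoints[OF simple] by auto

lemma padj_diagonal: "{x, y} \<in> edges G \<Longrightarrow> Suc j < n \<Longrightarrow> padj (x, j) (y, Suc j)"
  unfolding product_adj_def path_adj_def using edge_endpoints[OF simple] by auto

lemma padj_antidiagonal: "{x, y} \<in> edges G \<Longrightarrow> Suc j < n \<Longrightarrow> padj (x, Suc j) (y, j)"
  by (metis insert_commute padj_diagonal product_adj_sym)

lemma edge_boundary_HI: "padj p q \<Longrightarrow> (p \<in> X) \<noteq> (q \<in> X) \<Longrightarrow> {p, q} \<in> edge_boundary H X"
  by (rule edge_boundaryI) (simp_all add: edges_H_iff)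

lemma degree_H_le:
  assumes "x \<in> verts G" "j \<in> K" "finite K" "\<And>k. k < n \<Longrightarrow> path_adj j k \<Longrightarrow> k \<in> K"
  shows "degree H (x, j) \<le> (degree G x + 1) * card K - 1"
proof -
  let ?A = "(insert x (neighbours G x) \<times> K) - {(x, j)}"
  have "{f \<in> edges H. (x, j) \<in> f} \<subseteq> (\<lambda>q. {(x, j), q}) ` ?A"
  proof
    fix f assume f: "f \<in> {f \<in> edges H. (x, j) \<in> f}"
    obtain a b where "f = {a, b}" using f edge_doubleton[OF simple_graph_H] by blast
    with f have q: "f = {(x, j), if a = (x, j) then b else a}" by auto
    obtain z k where zk: "(if a = (x, j) then b else a) = (z, k)" by fastforce
    have zk_adj: "padj (x, j) (z, k)" using f q zk edges_H_iff by auto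
    then have "z = x \<or> z \<in> neighbours G x" "k = j \<or> path_adj j k" "k < n"
      unfolding product_adj_def neighbours_def by auto
    moreover have "(z, k) \<noteq> (x, j)" using padj_distinct_verts[OF zk_adj] by auto
    ultimately have "(z, k) \<in> ?A" using assms(2,4) by auto
    then show "f \<in> (\<lambda>q. {(x, j), q}) ` ?A" using q zk by auto
  qed
  then have "degree H (x, j) \<le> card ?A"
    unfolding degree_def using assms(3) finite_neighbours[OF simple] by (intro surj_card_le) auto
  also have "\<dots> = card (insert x (neighbours G x)) * card K - 1"
    using assms finite_neighbours[OF simple] by (simp add: card_cartesian_product)
  also have "\<dots> \<le> (degree G x + 1) * card K - 1"
    using card_insert_le_m1[of "Suc (degree G x)" "neighbours G x" x] finite_neighbours[OF simple]
      card_neighbours_le_degree[OF simple, of x]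
    by (intro diff_le_mono mult_le_mono1) (simp add: card_insert_if)
  finally show ?thesis .
qed

lemma degree_H_bottom_le:
  assumes "x \<in> verts G" shows "degree H (x, 0) \<le> 2 * degree G x + 1"
proof -
  have "degree H (x, 0) \<le> (degree G x + 1) * card {0 :: nat, 1} - 1"
    by (rule degree_H_le) (use assms in \<open>auto simp: path_adj_def\<close>)
  then show ?thesis by simp
qed

lemma degree_H_layer_one_le:
  assumes "x \<in> verts G" shows "degree H (x, 1) \<le> 3 * degree G x + 2"
proof -
  have "degree H (x, 1) \<le> (degree G x + 1) * card {0 :: nat, 1, 2} - 1"
    by (rule degree_H_le) (use assms in \<open>auto simp: path_adj_def\<close>)
  then show ?thesis by simp
qed

lemma min_edge_degree_H_le:
  assumes "edges G \<noteq> {}"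
  shows "min_edge_degree H \<le> min (2 * min_edge_degree G + 4) (5 * min_degree G + 1)"
proof -
  obtain y z where yz: "{y, z} \<in> edges G" "min_edge_degree G = degree G y + degree G z - 2"
    using min_edge_degree_attained[OF simple assms] by metis
  have "min_edge_degree H \<le> degree H (y, 0) + degree H (z, 0) - 2"
    using min_edge_degree_le[OF simple_graph_H] edges_H_iff padj_horizontal[OF yz(1)] two_le_n
    by simp
  moreover have "0 < degree G y" "0 < degree G z"
    using degree_pos[OF simple] yz(1) insert_commute[of y z "{}"] by metis+
  ultimately have xi: "min_edge_degree H \<le> 2 * min_edge_degree G + 4"
    using degree_H_bottom_le[of y] degree_H_bottom_le[of z] edge_endpoints[OF simple yz(1)] yz(2)
    by linarith
  have "verts G \<noteq> {}" using yz(1) edge_endpoints[OF simple] by blast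
  then obtain x where x: "x \<in> verts G" "min_degree G = degree G x"
    using min_degree_attained[OF simple] by metis
  have "min_edge_degree H \<le> degree H (x, 0) + degree H (x, 1) - 2"
    using min_edge_degree_le[OF simple_graph_H] edges_H_iff padj_vertical[OF x(1), of 0] two_le_n
    by simp
  then have "min_edge_degree H \<le> 5 * min_degree G + 1"
    using degree_H_bottom_le[OF x(1)] degree_H_layer_one_le[OF x(1)] x(2) by linarith
  with xi show ?thesis by simp
qed

lemma three_neighbours_H:
  assumes "{x, y} \<in> edges G" "j < n"
  obtains j' where "padj (x, j) (x, j')" "padj (x, j) (y, j)" "padj (x, j) (y, j')" "j' \<noteq> j"
proof
  let ?j' = "if Suc j < n then Suc j else j - 1"
  have "?j' < n" "path_adj j ?j'" unfolding path_adj_def using assms(2) two_le_n by auto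
  then show "padj (x, j) (x, ?j')" "padj (x, j) (y, j)" "padj (x, j) (y, ?j')" "?j' \<noteq> j"
    unfolding product_adj_def path_adj_def using assms edge_endpoints[OF simple] by auto
qed

lemma padj_escape:
  assumes "connected G" "nontrivial G" "p \<in> verts H"
  shows "\<exists>p'. padj p p' \<and> p' \<notin> {u, v}"
proof -
  obtain x j where p: "p = (x, j)" "x \<in> verts G" "j < n"
    using assms(3) unfolding verts_strong_product_path by (cases p) auto
  obtain y where xy: "{x, y} \<in> edges G"
    using connected_nontrivial_has_neighbour[OF assms(1,2) p(2)] .
  obtain j' where "padj p (x, j')" "padj p (y, j)" "padj p (y, j')" "j' \<noteq> j"
    using three_neighbours_H[OF xy p(3)] p(1) by metis
  moreover have "x \<noteq> y" using edge_endpoints[OF simple xy] by simp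
  ultimately show ?thesis by (metis insertE prod.inject singletonD)
qed

lemma restricted_edge_cut_H:
  assumes "connected G" "nontrivial G"
  obtains S where "restricted_edge_cut H S" "card S = min_edge_degree H"
proof (rule restricted_edge_cut_min_edge_degree[OF simple_graph_H])
  obtain x where x: "x \<in> verts G" using assms(1) unfolding connected_def by auto
  obtain y where "{x, y} \<in> edges G" using connected_nontrivial_has_neighbour[OF assms x] .
  then show "edges H \<noteq> {}" using padj_horizontal[of x y 0] two_le_n edges_H_iff by auto
  have "2 * 2 \<le> card (verts G) * n"
    using assms(2) two_le_n unfolding nontrivial_def by (intro mult_le_mono) auto
  then show "3 \<le> card (verts H)"
    unfolding verts_strong_product_path by (simp add: card_cartesian_product)
  show "\<exists>t'. {t, t'} \<in> edges H \<and> t' \<notin> {u, v}" if "t \<in> verts H" for u v t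
    using padj_escape[OF assms that] edges_H_iff by blast
qed (use that in blast)

section \<open>Counting boundary edges column by column\<close>

definition full_column :: "('a \<times> nat) set \<Rightarrow> 'a \<Rightarrow> bool" where
  "full_column X x \<longleftrightarrow> (\<forall>j<n. (x, j) \<in> X)"

definition empty_column :: "('a \<times> nat) set \<Rightarrow> 'a \<Rightarrow> bool" where
  "empty_column X x \<longleftrightarrow> (\<forall>j<n. (x, j) \<notin> X)"

definition mixed_columns :: "('a \<times> nat) set \<Rightarrow> 'a set" where
  "mixed_columns X = {x \<in> verts G. \<not> empty_column X x \<and> \<not> full_column X x}"

definition vertical_boundary :: "('a \<times> nat) set \<Rightarrow> ('a \<times> nat) set set" where
  "vertical_boundary X = {f \<in> edge_boundary H X. \<exists>x j. f = {(x, j), (x, Suc j)}}"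

definition boundary_over :: "('a \<times> nat) set \<Rightarrow> 'a set \<Rightarrow> ('a \<times> nat) set set" where
  "boundary_over X e = {f \<in> edge_boundary H X. fst ` f = e}"

lemma mixed_column_switch:
  assumes "x \<in> mixed_columns X"
  obtains j where "Suc j < n" "((x, j) \<in> X) \<noteq> ((x, Suc j) \<in> X)"
proof -
  have "\<exists>j. Suc j < n \<and> ((x, j) \<in> X) \<noteq> ((x, Suc j) \<in> X)"
  proof (rule ccontr)
    assume "\<nexists>j. Suc j < n \<and> ((x, j) \<in> X) \<noteq> ((x, Suc j) \<in> X)"
    then have "((x, j) \<in> X) = ((x, 0) \<in> X)" if "j < n" for j
      using that by (induction j) auto
    then have "empty_column X x \<or> full_column X x"
      unfolding empty_column_def full_column_def by blast
    with assms show False unfolding mixed_columns_def by blast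
  qed
  then show ?thesis using that by blast
qed

lemma card_mixed_columns_le: "card (mixed_columns X) \<le> card (vertical_boundary X)"
proof -
  have "mixed_columns X \<subseteq> (\<lambda>f. THE x. x \<in> fst ` f) ` vertical_boundary X"
  proof
    fix x assume x: "x \<in> mixed_columns X"
    then obtain j where j: "Suc j < n" "((x, j) \<in> X) \<noteq> ((x, Suc j) \<in> X)"
      by (rule mixed_column_switch)
    have "x \<in> verts G" using x unfolding mixed_columns_def by simp
    then have "{(x, j), (x, Suc j)} \<in> vertical_boundary X"
      unfolding vertical_boundary_def using edge_boundary_HI[OF padj_vertical j(2)] j(1) by blast
    moreover have "x = (THE x'. x' \<in> fst ` {(x, j), (x, Suc j)})" by simp
    ultimately show "x \<in> (\<lambda>f. THE x. x \<in> fst ` f) ` vertical_boundary X" by blast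
  qed
  then show ?thesis
    using finite_edge_boundary[OF simple_graph_H] unfolding vertical_boundary_def
    by (intro surj_card_le) auto
qed

lemma finite_boundary_over: "finite (boundary_over X e)"
  using finite_edge_boundary[OF simple_graph_H] unfolding boundary_over_def by simp

lemma two_le_card_boundary_over:
  assumes e: "{y, z} \<in> edges G" and y: "y \<in> mixed_columns X"
  shows "2 \<le> card (boundary_over X {y, z})"
proof -
  obtain j where j: "Suc j < n" "((y, j) \<in> X) \<noteq> ((y, Suc j) \<in> X)"
    using y by (rule mixed_column_switch)
  have "y \<noteq> z" using edge_endpoints[OF simple e] by simp
  txt \<open>Exactly one of \<open>(y, j)\<close>, \<open>(y, j + 1)\<close> lies on the other side of \<open>(z, j)\<close>, and
    likewise for \<open>(z, j + 1)\<close>.\<close>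
  define f1 where "f1 = (if ((y, j) \<in> X) = ((z, j) \<in> X) then {(y, Suc j), (z, j)} else {(y, j), (z, j)})"
  define f2 where "f2 = (if ((y, j) \<in> X) = ((z, Suc j) \<in> X) then {(y, Suc j), (z, Suc j)} else {(y, j), (z, Suc j)})"
  have "j < n" using j(1) by simp
  have "f1 \<in> edge_boundary H X"
    unfolding f1_def using j(2) edge_boundary_HI[OF padj_antidiagonal[OF e j(1)], of X]
      edge_boundary_HI[OF padj_horizontal[OF e \<open>j < n\<close>], of X] by auto
  moreover have "f2 \<in> edge_boundary H X"
    unfolding f2_def using j(2) edge_boundary_HI[OF padj_horizontal[OF e j(1)], of X]
      edge_boundary_HI[OF padj_diagonal[OF e j(1)], of X] by auto
  ultimately have "{f1, f2} \<subseteq> boundary_over X {y, z}"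
    unfolding boundary_over_def f1_def f2_def by auto
  moreover have "f1 \<noteq> f2" unfolding f1_def f2_def using \<open>y \<noteq> z\<close> by (auto simp: doubleton_eq_iff)
  ultimately show ?thesis using finite_boundary_over card_mono[of "boundary_over X {y, z}" "{f1, f2}"]
    by auto
qed

lemma five_le_card_boundary_over:
  assumes e: "{y, z} \<in> edges G" and j: "Suc j < n" "(y, j) \<in> X" "(y, Suc j) \<in> X"
    and z: "empty_column X z" and three_le_n: "3 \<le> n"
  shows "5 \<le> card (boundary_over X {y, z})"
proof -
  have "y \<noteq> z" using edge_endpoints[OF simple e] by simp
  have z_out: "k < n \<Longrightarrow> (z, k) \<notin> X" for k using z unfolding empty_column_def by blast
  txt \<open>Besides the four edges between \<open>{y} \<times> {j, j + 1}\<close> and \<open>{z} \<times> {j, j + 1}\<close>, a fifth one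
    goes up from \<open>(y, j + 1)\<close>, or down from \<open>(y, j)\<close> if \<open>j + 1\<close> is the top layer.\<close>
  define k where "k = (if Suc (Suc j) < n then Suc (Suc j) else j - 1)"
  define f5 where "f5 = (if Suc (Suc j) < n then {(y, Suc j), (z, k)} else {(y, j), (z, k)})"
  have f5: "f5 \<in> edge_boundary H X"
  proof (cases "Suc (Suc j) < n")
    case True
    then show ?thesis unfolding f5_def k_def
      using edge_boundary_HI[OF padj_diagonal[OF e True]] j z_out[OF True] by simp
  next
    case False
    then have "Suc (j - 1) = j" using three_le_n j(1) by linarith
    then have "padj (y, j) (z, j - 1)" using padj_antidiagonal[OF e, of "j - 1"] j(1) by simp
    then show ?thesis unfolding f5_def k_def using False edge_boundary_HI j z_out[of "j - 1"] by simp
  qed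
  let ?F = "{{(y, j), (z, j)}, {(y, j), (z, Suc j)}, {(y, Suc j), (z, j)}, {(y, Suc j), (z, Suc j)}, f5}"
  have "?F \<subseteq> boundary_over X {y, z}"
    unfolding boundary_over_def using f5 j z_out
      edge_boundary_HI[OF padj_horizontal[OF e, of j]] edge_boundary_HI[OF padj_diagonal[OF e j(1)]]
      edge_boundary_HI[OF padj_antidiagonal[OF e j(1)]] edge_boundary_HI[OF padj_horizontal[OF e, of "Suc j"]]
    by (auto simp: f5_def)
  moreover have "card ?F = 5"
    unfolding f5_def k_def using \<open>y \<noteq> z\<close> three_le_n j(1) by (auto simp: doubleton_eq_iff)
  ultimately show ?thesis using finite_boundary_over by (metis card_mono)
qed

lemma vertical_boundary_plus_boundary_over_le:
  assumes "F \<subseteq> edges G"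
  shows "card (vertical_boundary X) + (\<Sum>e\<in>F. card (boundary_over X e)) \<le> card (edge_boundary H X)"
proof -
  have F: "finite F" using assms finite_edges[OF simple] finite_subset by blast
  have "(\<Sum>e\<in>F. card (boundary_over X e)) = card (\<Union>e\<in>F. boundary_over X e)"
    by (rule card_UN_disjoint[symmetric, OF F]) (auto simp: finite_boundary_over, auto simp: boundary_over_def)
  moreover have "vertical_boundary X \<inter> (\<Union>e\<in>F. boundary_over X e) = {}"
  proof -
    have "card (fst ` f) = 1" if "f \<in> vertical_boundary X" for f
      using that unfolding vertical_boundary_def by auto
    moreover have "card (fst ` f) = 2" if "f \<in> boundary_over X e" "e \<in> F" for f e
      using that assms simple unfolding boundary_over_def simple_graph_def by auto
    ultimately show ?thesis by fastforce
  qed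
  moreover have "vertical_boundary X \<union> (\<Union>e\<in>F. boundary_over X e) \<subseteq> edge_boundary H X"
    unfolding vertical_boundary_def boundary_over_def by blast
  ultimately show ?thesis
    using finite_edge_boundary[OF simple_graph_H] finite_subset
    by (metis (no_types, lifting) card_Un_disjoint card_mono finite_Un)
qed

lemma boundary_bound_adjacent_mixed_columns:
  assumes y: "y \<in> mixed_columns X" and z: "z \<in> mixed_columns X" and e: "{y, z} \<in> edges G"
  shows "2 * min_edge_degree G + 4 \<le> card (edge_boundary H X)"
proof -
  let ?F = "{e \<in> edges G. y \<in> e} \<union> {e \<in> edges G. z \<in> e}"
  have "y \<noteq> z" using edge_endpoints[OF simple e] by simp
  have "2 \<le> card (boundary_over X f)" if "f \<in> ?F" for f
  proof -
    obtain a where a: "a \<in> {y, z}" "a \<in> f" "f \<in> edges G" using \<open>f \<in> ?F\<close> by auto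
    then obtain b where "f = {a, b}" by (auto elim: edge_at_vertex[OF simple])
    then show ?thesis using two_le_card_boundary_over[of a b] a y z by auto
  qed
  then have "2 * card ?F \<le> (\<Sum>f\<in>?F. card (boundary_over X f))"
    using sum_mono[of ?F "\<lambda>_. 2 :: nat"] by (simp add: mult.commute)
  moreover have "card ?F = degree G y + degree G z - 1" by (rule card_edges_at_edge[OF simple e])
  moreover have "2 \<le> card (mixed_columns X)"
  proof -
    have "finite (mixed_columns X)" using finite_verts[OF simple] unfolding mixed_columns_def by simp
    then show ?thesis using y z \<open>y \<noteq> z\<close> card_mono[of "mixed_columns X" "{y, z}"] by auto
  qed
  moreover have "card (vertical_boundary X) + (\<Sum>f\<in>?F. card (boundary_over X f)) \<le> card (edge_boundary H X)"
    by (rule vertical_boundary_plus_boundary_over_le) auto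
  moreover have "min_edge_degree G \<le> degree G y + degree G z - 2"
    by (rule min_edge_degree_le[OF simple e])
  moreover have "0 < degree G y" "0 < degree G z"
    using degree_pos[OF simple] e insert_commute[of y z "{}"] by metis+
  ultimately show ?thesis using card_mixed_columns_le[of X] by linarith
qed

lemma boundary_bound_column_with_empty_neighbours:
  assumes y: "y \<in> mixed_columns X" "Suc j < n" "(y, j) \<in> X" "(y, Suc j) \<in> X"
    and nbrs: "\<And>z. {y, z} \<in> edges G \<Longrightarrow> empty_column X z" and three_le_n: "3 \<le> n"
  shows "5 * min_degree G + 1 \<le> card (edge_boundary H X)"
proof -
  let ?F = "{e \<in> edges G. y \<in> e}"
  have "5 \<le> card (boundary_over X f)" if "f \<in> ?F" for f
  proof -
    obtain z where "f = {y, z}" "{y, z} \<in> edges G"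
      using \<open>f \<in> ?F\<close> by (auto elim: edge_at_vertex[OF simple])
    then show ?thesis using five_le_card_boundary_over[OF _ y(2-4) nbrs three_le_n] by simp
  qed
  then have "5 * degree G y \<le> (\<Sum>f\<in>?F. card (boundary_over X f))"
    using sum_mono[of ?F "\<lambda>_. 5 :: nat"] unfolding degree_def by (simp add: mult.commute)
  moreover have "0 < card (mixed_columns X)"
    using y(1) finite_verts[OF simple] unfolding mixed_columns_def by (auto simp: card_gt_0_iff)
  moreover have "card (vertical_boundary X) + (\<Sum>f\<in>?F. card (boundary_over X f)) \<le> card (edge_boundary H X)"
    by (rule vertical_boundary_plus_boundary_over_le) auto
  moreover have "min_degree G \<le> degree G y"
    using y(1) min_degree_le[OF simple] unfolding mixed_columns_def by simp
  ultimately show ?thesis using card_mixed_columns_le[of X] by linarith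
qed

lemma boundary_bound_no_full_column:
  assumes X: "X \<subseteq> verts H" "(y, j) \<in> X" and nbr: "\<And>p. p \<in> X \<Longrightarrow> \<exists>q\<in>X. {p, q} \<in> edges H"
    and no_full: "\<forall>x\<in>verts G. \<not> full_column X x"
  shows "min (2 * min_edge_degree G + 4) (5 * min_degree G + 1) \<le> card (edge_boundary H X)"
proof -
  have yj: "y \<in> verts G" "j < n" using X unfolding verts_strong_product_path by auto
  have y: "y \<in> mixed_columns X"
    unfolding mixed_columns_def empty_column_def using yj X no_full by auto
  show ?thesis
  proof (cases "\<exists>z \<in> mixed_columns X. {y, z} \<in> edges G")
    case True
    then show ?thesis using boundary_bound_adjacent_mixed_columns[OF y] by fastforce
  next
    case False
    have nbrs: "empty_column X z" if "{y, z} \<in> edges G" for z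
      using False that edge_endpoints[OF simple that] no_full unfolding mixed_columns_def by blast
    obtain z k where zk: "(z, k) \<in> X" "padj (y, j) (z, k)" using nbr[OF X(2)] edges_H_iff by auto
    then have "z = y"
      using nbrs unfolding product_adj_def empty_column_def by auto
    with zk have "path_adj j k" "(y, k) \<in> X"
      using edge_endpoints[OF simple, of y y] unfolding product_adj_def by auto
    then obtain i where i: "Suc i < n" "(y, i) \<in> X" "(y, Suc i) \<in> X"
      using X(2) zk(2) unfolding path_adj_def product_adj_def by auto
    obtain i' where "i' < n" "(y, i') \<notin> X" using no_full yj unfolding full_column_def by blast
    with i have "3 \<le> n" by (cases "i' = i \<or> i' = Suc i") auto
    then show ?thesis using boundary_bound_column_with_empty_neighbours[OF y i nbrs] by simp
  qed
qed

definition layer :: "('a \<times> nat) set \<Rightarrow> nat \<Rightarrow> 'a set" where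
  "layer X j = {x \<in> verts G. (x, j) \<in> X}"

definition boundary_in_layer :: "('a \<times> nat) set \<Rightarrow> nat \<Rightarrow> ('a \<times> nat) set set" where
  "boundary_in_layer X j = {f \<in> edge_boundary H X. snd ` f = {j}}"

definition boundary_between_layers :: "('a \<times> nat) set \<Rightarrow> nat \<Rightarrow> ('a \<times> nat) set set" where
  "boundary_between_layers X j = {f \<in> edge_boundary H X. snd ` f = {j, Suc j}}"

lemma edge_connectivity_le_card_boundary_in_layer:
  assumes "j < n" "z \<in> verts G" "full_column X z" "y \<in> verts G" "empty_column X y"
  shows "edge_connectivity G \<le> card (boundary_in_layer X j)"
proof -
  have "edge_connectivity G \<le> card (edge_boundary G (layer X j))"
    using assms unfolding layer_def full_column_def empty_column_def
    by (intro edge_connectivity_le_card_edge_boundary[of _ G z y]) auto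
  also have "\<dots> \<le> card (boundary_in_layer X j)"
  proof (rule surj_card_le)
    show "finite (boundary_in_layer X j)"
      using finite_edge_boundary[OF simple_graph_H] unfolding boundary_in_layer_def by simp
    show "edge_boundary G (layer X j) \<subseteq> (\<lambda>f. fst ` f) ` boundary_in_layer X j"
    proof
      fix e assume "e \<in> edge_boundary G (layer X j)"
      then obtain a b where ab: "e = {a, b}" "{a, b} \<in> edges G" "a \<in> layer X j" "b \<notin> layer X j"
        by (rule edge_boundary_oriented[OF simple])
      then have "{(a, j), (b, j)} \<in> boundary_in_layer X j"
        using edge_boundary_HI[OF padj_horizontal[OF ab(2) assms(1)]] edge_endpoints[OF simple ab(2)]
        unfolding boundary_in_layer_def layer_def by auto
      moreover have "e = fst ` {(a, j), (b, j)}" using ab by simp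
      ultimately show "e \<in> (\<lambda>f. fst ` f) ` boundary_in_layer X j" by blast
    qed
  qed
  finally show ?thesis .
qed

lemma boundary_between_layers_over_edge:
  assumes e: "{a, b} \<in> edges G" and j: "Suc j < n"
  shows "of_bool ({a, b} \<in> edge_boundary G (layer X j \<inter> layer X (Suc j)))
           + of_bool ({a, b} \<in> edge_boundary G (layer X j \<union> layer X (Suc j)))
         \<le> card (boundary_over X {a, b} \<inter> boundary_between_layers X j)"
proof -
  let ?D = "boundary_over X {a, b} \<inter> boundary_between_layers X j"
  let ?c1 = "((a, j) \<in> X) \<noteq> ((b, Suc j) \<in> X)" and ?c2 = "((b, j) \<in> X) \<noteq> ((a, Suc j) \<in> X)"
  have ab: "a \<noteq> b" "a \<in> verts G" "b \<in> verts G" using edge_endpoints[OF simple e] by auto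
  have d1: "?c1 \<Longrightarrow> {(a, j), (b, Suc j)} \<in> ?D"
    using edge_boundary_HI[OF padj_diagonal[OF e j]]
    unfolding boundary_over_def boundary_between_layers_def by auto
  have d2: "?c2 \<Longrightarrow> {(b, j), (a, Suc j)} \<in> ?D"
    using edge_boundary_HI[OF padj_diagonal[OF _ j], of b a] e
    unfolding boundary_over_def boundary_between_layers_def by (auto simp: insert_commute)
  have fin: "finite ?D" using finite_boundary_over by simp
  let ?D' = "(if ?c1 then {{(a, j), (b, Suc j)}} else {}) \<union> (if ?c2 then {{(b, j), (a, Suc j)}} else {})"
  have "card ?D' = of_bool ?c1 + of_bool ?c2"
    using ab(1) by (simp add: doubleton_eq_iff)
  moreover have "card ?D' \<le> card ?D" using d1 d2 fin by (intro card_mono) auto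
  ultimately have "of_bool ?c1 + of_bool ?c2 \<le> card ?D" by simp
  moreover have "(x \<in> layer X i) = ((x, i) \<in> X)" if "x \<in> verts G" for x i
    using that unfolding layer_def by simp
  ultimately show ?thesis
    using crossing_count_ge_boundary_count[of a "layer X j" "layer X (Suc j)" b] ab
    unfolding doubleton_in_edge_boundary_iff[OF e] by simp
qed

lemma sum_boundary_over_between_layers_le:
  "(\<Sum>e\<in>edges G. card (boundary_over X e \<inter> boundary_between_layers X j))
     \<le> card (boundary_between_layers X j)"
proof -
  have "(\<Sum>e\<in>edges G. card (boundary_over X e \<inter> boundary_between_layers X j))
      = card (\<Union>e\<in>edges G. boundary_over X e \<inter> boundary_between_layers X j)"
    using finite_edges[OF simple] finite_boundary_over
    by (intro card_UN_disjoint[symmetric]) (auto simp: boundary_over_def)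
  also have "\<dots> \<le> card (boundary_between_layers X j)"
    using finite_edge_boundary[OF simple_graph_H]
    by (intro card_mono) (auto simp: boundary_between_layers_def)
  finally show ?thesis .
qed

lemma two_edge_connectivity_le_card_boundary_between_layers:
  assumes j: "Suc j < n" and "z \<in> verts G" "full_column X z" "y \<in> verts G" "empty_column X y"
  shows "2 * edge_connectivity G \<le> card (boundary_between_layers X j)"
proof -
  let ?W = "layer X j \<inter> layer X (Suc j)" and ?U = "layer X j \<union> layer X (Suc j)"
  have "edge_connectivity G \<le> card (edge_boundary G ?W)" "edge_connectivity G \<le> card (edge_boundary G ?U)"
    using assms unfolding layer_def full_column_def empty_column_def
    by (intro edge_connectivity_le_card_edge_boundary[of _ G z y]; force)+
  moreover have "card (edge_boundary G B) = (\<Sum>e\<in>edges G. of_bool (e \<in> edge_boundary G B))" for B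
    using finite_edges[OF simple] by (simp add: Int_def edge_boundary_def)
  moreover have "(\<Sum>e\<in>edges G. of_bool (e \<in> edge_boundary G ?W) + of_bool (e \<in> edge_boundary G ?U))
      \<le> (\<Sum>e\<in>edges G. card (boundary_over X e \<inter> boundary_between_layers X j))"
  proof (rule sum_mono)
    fix e assume "e \<in> edges G"
    then obtain a b where "e = {a, b}" by (rule edge_doubleton[OF simple])
    then show "of_bool (e \<in> edge_boundary G ?W) + of_bool (e \<in> edge_boundary G ?U)
        \<le> card (boundary_over X e \<inter> boundary_between_layers X j)"
      using boundary_between_layers_over_edge[OF _ j] \<open>e \<in> edges G\<close> by simp
  qed
  ultimately show ?thesis
    using sum_boundary_over_between_layers_le[of X j] by (simp add: sum.distrib)
qed

lemma boundary_bound_full_and_empty_columns: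
  assumes "z \<in> verts G" "full_column X z" "y \<in> verts G" "empty_column X y"
  shows "(3 * n - 2) * edge_connectivity G \<le> card (edge_boundary H X)"
proof -
  let ?l = "edge_connectivity G"
  let ?L = "\<Union>j<n. boundary_in_layer X j" and ?D = "\<Union>j<n - 1. boundary_between_layers X j"
  have fin: "finite (boundary_in_layer X j)" "finite (boundary_between_layers X j)" for j
    using finite_edge_boundary[OF simple_graph_H]
    unfolding boundary_in_layer_def boundary_between_layers_def by simp_all
  have "n * ?l = (\<Sum>j<n. ?l)" by simp
  also have "\<dots> \<le> (\<Sum>j<n. card (boundary_in_layer X j))"
    using edge_connectivity_le_card_boundary_in_layer[OF _ assms] by (intro sum_mono) simp
  also have "\<dots> = card ?L"
    using fin by (intro card_UN_disjoint[symmetric]) (auto simp: boundary_in_layer_def)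
  finally have L: "n * ?l \<le> card ?L" .
  have "(n - 1) * (2 * ?l) = (\<Sum>j<n - 1. 2 * ?l)" by simp
  also have "\<dots> \<le> (\<Sum>j<n - 1. card (boundary_between_layers X j))"
    using two_edge_connectivity_le_card_boundary_between_layers[OF _ assms] by (intro sum_mono) simp
  also have "\<dots> = card ?D"
  proof (intro card_UN_disjoint[symmetric])
    show "\<forall>i\<in>{..<n - 1}. \<forall>k\<in>{..<n - 1}. i \<noteq> k \<longrightarrow>
        boundary_between_layers X i \<inter> boundary_between_layers X k = {}"
      unfolding boundary_between_layers_def by (auto simp: doubleton_eq_iff)
  qed (use fin in auto)
  finally have D: "(n - 1) * (2 * ?l) \<le> card ?D" .
  have "?L \<inter> ?D = {}"
    unfolding boundary_in_layer_def boundary_between_layers_def by (auto simp: doubleton_eq_iff)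
  then have "card ?L + card ?D \<le> card (edge_boundary H X)"
    using fin finite_edge_boundary[OF simple_graph_H]
    by (subst card_Un_disjoint[symmetric]) (auto intro!: card_mono
        simp: boundary_in_layer_def boundary_between_layers_def)
  moreover have "(3 * n - 2) * ?l = n * ?l + (n - 1) * (2 * ?l)"
  proof -
    have "3 * n - 2 = n + (n - 1) * 2" using two_le_n by simp
    then show ?thesis by (simp add: algebra_simps)
  qed
  ultimately show ?thesis using L D by linarith
qed

lemma boundary_bound:
  assumes X: "X \<subseteq> verts H" "X \<noteq> {}" "verts H - X \<noteq> {}"
    and in_X: "\<And>p. p \<in> X \<Longrightarrow> \<exists>q\<in>X. {p, q} \<in> edges H"
    and out_X: "\<And>p. p \<in> verts H - X \<Longrightarrow> \<exists>q\<in>verts H - X. {p, q} \<in> edges H"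
    and hyp: "min (2 * min_edge_degree G + 4) (5 * min_degree G + 1) \<le> (3 * n - 2) * edge_connectivity G"
  shows "min (2 * min_edge_degree G + 4) (5 * min_degree G + 1) \<le> card (edge_boundary H X)"
proof (cases "\<exists>z\<in>verts G. full_column X z")
  case False
  with X in_X show ?thesis using boundary_bound_no_full_column by auto
next
  case full: True
  show ?thesis
  proof (cases "\<exists>y\<in>verts G. empty_column X y")
    case False
    have "edge_boundary H (verts H - X) = edge_boundary H X"
      by (rule edge_boundary_complement[OF simple_graph_H])
    moreover have "\<forall>y\<in>verts G. \<not> full_column (verts H - X) y"
      using False unfolding full_column_def empty_column_def verts_strong_product_path by auto
    ultimately show ?thesis using X(3) out_X boundary_bound_no_full_column[of "verts H - X"]
      by fastforce
  next
    case True
    with full show ?thesis using boundary_bound_full_and_empty_columns hyp by (meson le_trans)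
  qed
qed

lemma min_edge_degree_H_le_restricted_edge_cut:
  assumes "restricted_edge_cut H S" "edges G \<noteq> {}"
    and hyp: "min (2 * min_edge_degree G + 4) (5 * min_degree G + 1) \<le> (3 * n - 2) * edge_connectivity G"
  shows "min_edge_degree H \<le> card S"
proof -
  obtain e where "e \<in> edges G" using assms(2) by blast
  then obtain a b where "{a, b} \<in> edges G" by (metis edge_doubleton[OF simple])
  then have "verts G \<noteq> {}" using edge_endpoints[OF simple] by blast
  then have "verts H \<noteq> {}" using two_le_n unfolding verts_strong_product_path by auto
  then obtain C where C: "C \<subseteq> verts H" "C \<noteq> {}" "verts H - C \<noteq> {}" "edge_boundary H C \<subseteq> S"
    "\<And>p. p \<in> C \<Longrightarrow> \<exists>q\<in>C. {p, q} \<in> edges H"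
    "\<And>p. p \<in> verts H - C \<Longrightarrow> \<exists>q\<in>verts H - C. {p, q} \<in> edges H"
    using restricted_edge_cut_separates[OF simple_graph_H assms(1)] by metis
  have "finite S"
    using assms(1) finite_edges[OF simple_graph_H] finite_subset
    unfolding restricted_edge_cut_def edge_cut_def by blast
  then have "card (edge_boundary H C) \<le> card S" using C(4) card_mono by blast
  then show ?thesis
    using boundary_bound[OF C(1-3,5,6) hyp] min_edge_degree_H_le[OF assms(2)] by linarith
qed

end

theorem corollary3p2:
  fixes G :: "'a graph" and n :: nat
  assumes "simple_graph G" and "connected G" and "nontrivial G" and "n \<ge> 2"
    and "min ((3 * n - 2) * edge_connectivity G) (card (verts G) + 2 * num_edges G)
         \<ge> min (2 * min_edge_degree G + 4) (5 * min_degree G + 1)"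
  shows "maximally_restricted_edge_connected (strong_product G (path_graph n))"
proof -
  interpret graph_times_path G n using assms(1,4) by unfold_locales
  obtain x where x: "x \<in> verts G" using assms(2) unfolding connected_def by auto
  obtain y where "{x, y} \<in> edges G" using connected_nontrivial_has_neighbour[OF assms(2,3) x] .
  then have edges: "edges G \<noteq> {}" by auto
  obtain S0 where S0: "restricted_edge_cut H S0" "card S0 = min_edge_degree H"
    using restricted_edge_cut_H[OF assms(2,3)] .
  txt \<open>Only the first term of the minimum in the hypothesis is needed.\<close>
  have hyp: "min (2 * min_edge_degree G + 4) (5 * min_degree G + 1) \<le> (3 * n - 2) * edge_connectivity G"
    using assms(5) by simp
  have "restricted_edge_connectivity H \<le> min_edge_degree H"
    using restricted_edge_connectivity_le_card[OF S0(1)] S0(2) by simp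
  moreover have "min_edge_degree H \<le> restricted_edge_connectivity H"
    using le_restricted_edge_connectivity[OF S0(1)] min_edge_degree_H_le_restricted_edge_cut hyp edges
    by blast
  ultimately show ?thesis unfolding maximally_restricted_edge_connected_def by simp
qed

end
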